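(* In the setting below, with $Q=L/\mu$, let $\log$ denote the natural logarithm, let $a=\lceil\log(12(K+1)Q)\rceil+2$, let \[ \widetilde{\eta}_a=\frac1a\Big(\frac{1}{12(K+1)Q}\Big)^{\frac{2}{a-2}}, \] and run the PIAG method with step size $\eta=\frac{1}{3L(K+1)}\widetilde{\eta}_a$. Let $c=\max_{0\le j\le aK}F_j$, let $\epsilon>0$ and $M=54e^2$. Then $F(x_k)-F(x^* )\le\epsilon$ for every integer \[ k\ge Ma^2(K+1)^2Q\log(c/\epsilon)+aK . \]
   Context: Let $m,n\ge 1$ be integers and $\|\cdot\|$ the Euclidean norm on $\mathbb{R}^n$. For $i=1,\dots,m$, let $f_i:\mathbb{R}^n\to\mathbb{R}$ be continuously differentiable with $\|\nabla f_i(x)-\nabla f_i(y)\|\le L_i\|x-y\|$ for all $x,y$, where $L_i\ge 0$ (the $f_i$ are not assumed convex). Let $f=\frac1m\sum_{i=1}^m f_i$ and $L=\frac1m\sum_{i=1}^m L_i$. Assume $f$ is $\mu$-strongly convex for some $\mu>0$ (i.e. $x\mapsto f(x)-\frac{\mu}{2}\|x\|^2$ is convex). Let $r:\mathbb{R}^n\to(-\infty,\infty]$ be proper, closed and convex, let $F=f+r$, and let $x^*$ be the unique minimizer of $F$. For $\eta>0$ define $\mathrm{prox}_r^\eta(y)=\arg\min_{x\in\mathbb{R}^n}\{\frac12\|x-y\|^2+\eta r(x)\}$. PIAG method: fix an integer $K\ge 0$, a step size $\eta>0$ and $x_0\in\mathbb{R}^n$; for each $k\ge0$ and each $i$ let $\tau_{i,k}$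 be any (deterministically chosen) integer with $\max(k-K,0)\le\tau_{i,k}\le k$; set $g_k=\frac1m\sum_{i=1}^m\nabla f_i(x_{\tau_{i,k}})$ and $x_{k+1}=\mathrm{prox}_r^\eta(x_k-\eta g_k)$. Define $F_k=F(x_k)-F(x^* )$. *)

theory Defs
  imports "HOL-Analysis.Analysis"
begin

definition proper_fun :: "('a \<Rightarrow> ereal) \<Rightarrow> bool" where
  "proper_fun r \<longleftrightarrow> (\<forall>x. r x \<noteq> -\<infinity>) \<and> (\<exists>x. r x \<noteq> \<infinity>)"

definition closed_fun :: "('a::topological_space \<Rightarrow> ereal) \<Rightarrow> bool" where
  "closed_fun r \<longleftrightarrow> closed {p :: 'a \<times> real. r (fst p) \<le> ereal (snd p)}"

definition convex_fun :: "('a::real_vector \<Rightarrow> ereal) \<Rightarrow> bool" where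
  "convex_fun r \<longleftrightarrow> (\<forall>x y t. 0 \<le> t \<and> t \<le> 1 \<longrightarrow>
      r ((1 - t) *\<^sub>R x + t *\<^sub>R y) \<le> ereal (1 - t) * r x + ereal t * r y)"

text \<open>Proximal operator: the (unique, for proper closed convex r) minimizer.\<close>
definition prox :: "('a::real_normed_vector \<Rightarrow> ereal) \<Rightarrow> real \<Rightarrow> 'a \<Rightarrow> 'a" where
  "prox r \<eta> y = (THE x. \<forall>z. ereal (norm (x - y)^2 / 2) + ereal \<eta> * r x
                              \<le> ereal (norm (z - y)^2 / 2) + ereal \<eta> * r z)"

end

theory Submission
  imports Defs
begin

text \<open>A proximal gradient step taken with a gradient error e contracts the optimality gap by the
  factor 1 - \<eta>\<mu>/2, up to an additive 2\<eta>|e|^2 and minus a multiple of the squared step length.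
  In PIAG the error is bounded, through the Lipschitz gradients, by the last K step lengths; a
  Lyapunov function weighting these steps by how long they remain in the delay window shows that,
  once \<eta>L(K+1) \<le> 1/9, the step-length term absorbs the delays and F_k \<le> (1 - \<eta>\<mu>/2)^k F_0.
  The prescribed step size gives \<eta>\<mu>/2 \<ge> 1/(M a^2 (K+1)^2 Q), and F_0 \<le> c, so the claimed number
  of iterations suffices.\<close>

lemma has_real_derivative_along_line:
  fixes \<phi> :: "'a::real_inner \<Rightarrow> real"
  assumes "(\<phi> has_derivative (\<lambda>d. G \<bullet> d)) (at (x + s *\<^sub>R h))"
  shows "((\<lambda>s. \<phi> (x + s *\<^sub>R h)) has_real_derivative G \<bullet> h) (at s)"
proof -
  have "((\<lambda>s. x + s *\<^sub>R h) has_derivative (\<lambda>d. d *\<^sub>R h)) (at s)"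
    by (auto intro!: derivative_eq_intros)
  from diff_chain_at[OF this assms] show ?thesis
    by (simp add: o_def has_field_derivative_def mult_commute_abs)
qed

lemma lipschitz_gradient_upper_bound:
  fixes \<phi> :: "'a::real_inner \<Rightarrow> real" and G :: "'a \<Rightarrow> 'a"
  assumes der: "\<And>z. (\<phi> has_derivative (\<lambda>h. G z \<bullet> h)) (at z)"
    and lip: "\<And>y z. norm (G y - G z) \<le> L * norm (y - z)"
  shows "\<phi> y \<le> \<phi> x + G x \<bullet> (y - x) + L / 2 * (norm (y - x))\<^sup>2"
proof -
  define h where "h = y - x"
  define \<psi> where "\<psi> s = \<phi> (x + s *\<^sub>R h) - s * (G x \<bullet> h) - L / 2 * s\<^sup>2 * (norm h)\<^sup>2" for s
  have \<phi>_line: "((\<lambda>s. \<phi> (x + s *\<^sub>R h)) has_real_derivative G (x + s *\<^sub>R h) \<bullet> h) (at s)" for s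
    by (rule has_real_derivative_along_line[OF der])
  have \<psi>': "(\<psi> has_real_derivative G (x + s *\<^sub>R h) \<bullet> h - G x \<bullet> h - L * s * (norm h)\<^sup>2) (at s)" for s
    unfolding \<psi>_def by (auto intro!: derivative_eq_intros \<phi>_line)
  have "\<psi> 1 \<le> \<psi> 0"
  proof (rule DERIV_nonpos_imp_nonincreasing[of 0 1])
    fix s :: real assume s: "0 \<le> s" "s \<le> 1"
    have "G (x + s *\<^sub>R h) \<bullet> h - G x \<bullet> h \<le> norm (G (x + s *\<^sub>R h) - G x) * norm h"
      by (metis inner_diff_left norm_cauchy_schwarz)
    also have "\<dots> \<le> L * norm (s *\<^sub>R h) * norm h"
      using lip[of "x + s *\<^sub>R h" x] by (simp add: mult_right_mono)
    also have "\<dots> = L * s * (norm h)\<^sup>2"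
      using s by (simp add: power2_eq_square)
    finally show "\<exists>y. DERIV \<psi> s :> y \<and> y \<le> 0"
      using \<psi>'[of s] by (intro exI[of _ "G (x + s *\<^sub>R h) \<bullet> h - G x \<bullet> h - L * s * (norm h)\<^sup>2"]) simp
  qed simp
  then show ?thesis unfolding \<psi>_def h_def by simp
qed

lemma strongly_convex_gradient_lower_bound:
  fixes \<phi> :: "'a::real_inner \<Rightarrow> real" and G :: "'a \<Rightarrow> 'a"
  assumes der: "\<And>z. (\<phi> has_derivative (\<lambda>h. G z \<bullet> h)) (at z)"
    and conv: "convex_on UNIV (\<lambda>z. \<phi> z - \<mu> / 2 * (norm z)\<^sup>2)"
  shows "\<phi> x + G x \<bullet> (z - x) + \<mu> / 2 * (norm (z - x))\<^sup>2 \<le> \<phi> z"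
proof -
  define h where "h = z - x"
  define \<psi> where "\<psi> s = \<phi> (x + s *\<^sub>R h) - \<mu> / 2 * (x \<bullet> x + 2 * s * (x \<bullet> h) + s\<^sup>2 * (h \<bullet> h))" for s
  have \<psi>_eq: "\<psi> s = \<phi> (x + s *\<^sub>R h) - \<mu> / 2 * (norm (x + s *\<^sub>R h))\<^sup>2" for s
    unfolding \<psi>_def power2_norm_eq_inner
    by (simp add: inner_commute power2_eq_square algebra_simps)
  have "convex_on UNIV \<psi>"
  proof (rule convex_onI)
    fix t a b :: real assume t: "0 < t" "t < 1"
    have "x + ((1 - t) *\<^sub>R a + t *\<^sub>R b) *\<^sub>R h = (1 - t) *\<^sub>R (x + a *\<^sub>R h) + t *\<^sub>R (x + b *\<^sub>R h)"
      by (simp add: algebra_simps)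
    then show "\<psi> ((1 - t) *\<^sub>R a + t *\<^sub>R b) \<le> (1 - t) * \<psi> a + t * \<psi> b"
      using convex_onD[OF conv, of t "x + a *\<^sub>R h" "x + b *\<^sub>R h"] t
      unfolding \<psi>_eq by (simp add: algebra_simps)
  qed simp
  moreover have "(\<psi> has_real_derivative G x \<bullet> h - \<mu> * (x \<bullet> h)) (at 0)"
  proof -
    have "((\<lambda>s. \<phi> (x + s *\<^sub>R h)) has_real_derivative G x \<bullet> h) (at 0)"
      using has_real_derivative_along_line[OF der, where s = 0] by simp
    then show ?thesis
      unfolding \<psi>_def by (auto intro!: derivative_eq_intros)
  qed
  ultimately have "(G x \<bullet> h - \<mu> * (x \<bullet> h)) * (1 - 0) \<le> \<psi> 1 - \<psi> 0"
    by (intro convex_on_imp_above_tangent) auto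
  then show ?thesis unfolding \<psi>_def h_def
    by (simp add: power2_norm_eq_inner algebra_simps inner_commute)
qed

lemma convex_fun_real_part:
  fixes r :: "'a::real_vector \<Rightarrow> ereal"
  assumes cv: "convex_fun r" and pr: "proper_fun r"
  shows "convex_on {z. r z \<noteq> \<infinity>} (\<lambda>z. real_of_ereal (r z))"
proof -
  have finite_comb: "r ((1 - s) *\<^sub>R w + s *\<^sub>R z) \<noteq> \<infinity> \<and>
      real_of_ereal (r ((1 - s) *\<^sub>R w + s *\<^sub>R z))
        \<le> (1 - s) * real_of_ereal (r w) + s * real_of_ereal (r z)"
    if w: "r w \<noteq> \<infinity>" and z: "r z \<noteq> \<infinity>" and s: "0 \<le> s" "s \<le> 1" for w z s
  proof -
    have "r w = ereal (real_of_ereal (r w))" "r z = ereal (real_of_ereal (r z))"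
      and not_minf: "r ((1 - s) *\<^sub>R w + s *\<^sub>R z) \<noteq> -\<infinity>"
      using w z pr unfolding proper_fun_def by (auto simp: ereal_real)
    moreover have "r ((1 - s) *\<^sub>R w + s *\<^sub>R z) \<le> ereal (1 - s) * r w + ereal s * r z"
      using cv s unfolding convex_fun_def by blast
    ultimately have "r ((1 - s) *\<^sub>R w + s *\<^sub>R z)
        \<le> ereal ((1 - s) * real_of_ereal (r w) + s * real_of_ereal (r z))"
      by (metis times_ereal.simps(1) plus_ereal.simps(1))
    with not_minf show ?thesis by (cases "r ((1 - s) *\<^sub>R w + s *\<^sub>R z)") auto
  qed
  show ?thesis
  proof (rule convex_onI)
    show "convex {z. r z \<noteq> \<infinity>}"
      using finite_comb by (auto simp: convex_alt)
  qed (use finite_comb in auto)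
qed

lemma norm_convex_combination_sq:
  fixes a b :: "'a::real_inner"
  shows "(norm ((1 - s) *\<^sub>R a + s *\<^sub>R b))\<^sup>2
    = (1 - s) * (norm a)\<^sup>2 + s * (norm b)\<^sup>2 - s * (1 - s) * (norm (a - b))\<^sup>2"
  by (simp add: power2_norm_eq_inner inner_commute algebra_simps)

lemma strongly_convex_combination_le:
  fixes f :: "'a::real_inner \<Rightarrow> real"
  assumes conv: "convex_on UNIV (\<lambda>z. f z - \<mu> / 2 * (norm z)\<^sup>2)" and s: "0 \<le> s" "s \<le> 1"
  shows "f ((1 - s) *\<^sub>R a + s *\<^sub>R b)
    \<le> (1 - s) * f a + s * f b - \<mu> / 2 * (s * (1 - s)) * (norm (a - b))\<^sup>2"
  using convex_onD[OF conv s, of a b] unfolding norm_convex_combination_sq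
  by (simp add: algebra_simps add_divide_distrib diff_divide_distrib)

lemma minimizer_quadratic_growth:
  fixes f :: "'a::real_inner \<Rightarrow> real"
  assumes conv: "convex_on UNIV (\<lambda>z. f z - \<mu> / 2 * (norm z)\<^sup>2)" and R: "convex_on D R"
    and xs: "xs \<in> D" and xs_min: "\<And>z. z \<in> D \<Longrightarrow> f xs + R xs \<le> f z + R z"
    and x: "x \<in> D"
  shows "\<mu> / 2 * (norm (x - xs))\<^sup>2 \<le> f x + R x - (f xs + R xs)"
proof (rule field_le_mult_one_interval)
  fix s :: real assume s: "0 < s" "s < 1"
  define z where "z = (1 - s) *\<^sub>R x + s *\<^sub>R xs"
  have "z \<in> D" using convexD_alt[OF convex_on_imp_convex[OF R] x xs] s by (simp add: z_def)
  then have "f xs + R xs \<le> f z + R z" by (rule xs_min)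
  moreover have "R z \<le> (1 - s) * R x + s * R xs"
    using convex_onD[OF R, of s x xs] s x xs by (simp add: z_def)
  moreover have "f z \<le> (1 - s) * f x + s * f xs - \<mu> / 2 * (s * (1 - s)) * (norm (x - xs))\<^sup>2"
    unfolding z_def using s by (intro strongly_convex_combination_le[OF conv]) auto
  ultimately have "(1 - s) * (s * (\<mu> / 2 * (norm (x - xs))\<^sup>2)) \<le> (1 - s) * (f x + R x - (f xs + R xs))"
    by (simp add: algebra_simps)
  then show "s * (\<mu> / 2 * (norm (x - xs))\<^sup>2) \<le> f x + R x - (f xs + R xs)"
    using s by (simp add: mult_le_cancel_left_pos)
qed

text \<open>Move from the minimizer towards z and let the step size go to zero.\<close>
lemma proximal_minimizer_variational_ineq:
  fixes R :: "'a::real_inner \<Rightarrow> real"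
  assumes R: "convex_on D R" and eta: "\<eta> > 0" and w: "w \<in> D"
    and w_min: "\<And>z. z \<in> D \<Longrightarrow> (norm (w - y))\<^sup>2 / 2 + \<eta> * R w \<le> (norm (z - y))\<^sup>2 / 2 + \<eta> * R z"
    and z: "z \<in> D"
  shows "\<eta> * R w + (y - w) \<bullet> (z - w) \<le> \<eta> * R z"
proof -
  define B where "B = (w - y) \<bullet> (z - w) + \<eta> * R z"
  have step: "\<eta> * R w \<le> B + s * ((norm (z - w))\<^sup>2 / 2)" if s: "0 < s" "s < 1" for s
  proof -
    define q where "q = (1 - s) *\<^sub>R w + s *\<^sub>R z"
    have "q \<in> D" using convexD_alt[OF convex_on_imp_convex[OF R] w z] s by (simp add: q_def)
    have "(norm (q - y))\<^sup>2 = (norm (w - y))\<^sup>2 + 2 * (s * ((w - y) \<bullet> (z - w))) + s * (s * (norm (z - w))\<^sup>2)"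
      unfolding power2_norm_eq_inner q_def
      by (simp add: inner_commute algebra_simps power2_eq_square)
    moreover have "\<eta> * R q \<le> \<eta> * R w - s * (\<eta> * R w) + s * (\<eta> * R z)"
      using mult_left_mono[OF convex_onD[OF R, of s w z], of \<eta>] s w z eta
      by (simp add: q_def algebra_simps)
    ultimately have "s * (\<eta> * R w) \<le> s * ((w - y) \<bullet> (z - w)) + s * (\<eta> * R z) + s * (s * (norm (z - w))\<^sup>2) / 2"
      using w_min[OF \<open>q \<in> D\<close>] by linarith
    then have "s * (\<eta> * R w) \<le> s * (B + s * ((norm (z - w))\<^sup>2 / 2))"
      by (simp add: B_def algebra_simps)
    then show ?thesis using s by (simp add: mult_le_cancel_left_pos)
  qed
  have "((\<lambda>s. B + s * ((norm (z - w))\<^sup>2 / 2)) \<longlongrightarrow> B + 0 * ((norm (z - w))\<^sup>2 / 2)) (at_right 0)"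
    by (intro tendsto_intros)
  moreover have "\<forall>\<^sub>F s in at_right 0. \<eta> * R w \<le> B + s * ((norm (z - w))\<^sup>2 / 2)"
    using eventually_at_right_real[of 0 1] by (rule eventually_mono) (use step in auto)
  ultimately have "\<eta> * R w \<le> B" by (intro tendsto_lowerbound) auto
  then show ?thesis unfolding B_def by (simp add: inner_diff_left inner_diff_right inner_commute)
qed

lemma quadratic_le_linear_bound:
  fixes d s K B :: real
  assumes d: "d > 0" and s: "s \<ge> 0" and le: "d / 2 * s\<^sup>2 \<le> K + B * s"
  shows "s \<le> max 1 (2 * (\<bar>K\<bar> + \<bar>B\<bar>) / d)"
proof (cases "s \<le> 1")
  case False
  then have "K \<le> \<bar>K\<bar> * s" "B * s \<le> \<bar>B\<bar> * s"
    using mult_left_mono[of 1 s "\<bar>K\<bar>"] mult_right_mono[OF abs_ge_self s] by auto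
  then have "s * (d / 2 * s) \<le> s * (\<bar>K\<bar> + \<bar>B\<bar>)"
    using le by (simp add: power2_eq_square algebra_simps)
  then have "d / 2 * s \<le> \<bar>K\<bar> + \<bar>B\<bar>" using False by (simp add: mult_le_cancel_left_pos)
  then have "s \<le> 2 * (\<bar>K\<bar> + \<bar>B\<bar>) / d" using d by (simp add: field_simps)
  then show ?thesis by simp
qed simp

lemma closed_fun_limit_le:
  fixes r :: "'a::topological_space \<Rightarrow> ereal"
  assumes cl: "closed_fun r" and le: "\<And>n. r (z n) \<le> ereal (t n)"
    and z: "z \<longlonglongrightarrow> l" and t: "t \<longlonglongrightarrow> s"
  shows "r l \<le> ereal s"
proof -
  have "(z n, t n) \<in> {p. r (fst p) \<le> ereal (snd p)}" for n using le by simp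
  moreover have "(\<lambda>n. (z n, t n)) \<longlonglongrightarrow> (l, s)" using z t by (rule tendsto_Pair)
  ultimately show ?thesis using closed_sequentially[OF cl[unfolded closed_fun_def]] by fastforce
qed

lemma prox_objective_coercive:
  fixes r :: "'a::real_inner \<Rightarrow> ereal"
  assumes eta: "\<eta> > 0" and lower: "ereal (c0 - p \<bullet> z - \<gamma> / 2 * (norm z)\<^sup>2) \<le> r z" and z: "r z \<noteq> \<infinity>"
  shows "(1 - \<eta> * \<gamma>) / 2 * (norm z)\<^sup>2 - norm (y + \<eta> *\<^sub>R p) * norm z + ((norm y)\<^sup>2 / 2 + \<eta> * c0)
    \<le> (norm (z - y))\<^sup>2 / 2 + \<eta> * real_of_ereal (r z)"
proof -
  have "\<eta> * (c0 - p \<bullet> z - \<gamma> / 2 * (norm z)\<^sup>2) \<le> \<eta> * real_of_ereal (r z)"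
    using lower z eta by (cases "r z") auto
  moreover have "z \<bullet> (y + \<eta> *\<^sub>R p) \<le> norm z * norm (y + \<eta> *\<^sub>R p)"
    by (rule norm_cauchy_schwarz)
  moreover have "(norm (z - y))\<^sup>2 = (norm z)\<^sup>2 - 2 * (z \<bullet> y) + (norm y)\<^sup>2"
    by (simp add: power2_norm_eq_inner inner_diff_left inner_diff_right inner_commute)
  ultimately show ?thesis
    by (simp add: algebra_simps inner_commute add_divide_distrib diff_divide_distrib)
qed

text \<open>A minimizing sequence of the coercive proximal objective is bounded; the limit of a
  convergent subsequence is a minimizer because the epigraph of r is closed.\<close>
lemma prox_objective_has_minimizer:
  fixes r :: "'a::euclidean_space \<Rightarrow> ereal"
  assumes pr: "proper_fun r" and cl: "closed_fun r"
    and eta: "\<eta> > 0" and gam: "\<eta> * \<gamma> < 1"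
    and lower: "\<And>z. ereal (c0 - p \<bullet> z - \<gamma> / 2 * (norm z)\<^sup>2) \<le> r z"
  obtains l where "r l \<noteq> \<infinity>"
    and "\<And>z. r z \<noteq> \<infinity> \<Longrightarrow> (norm (l - y))\<^sup>2 / 2 + \<eta> * real_of_ereal (r l)
                                 \<le> (norm (z - y))\<^sup>2 / 2 + \<eta> * real_of_ereal (r z)"
proof -
  define D where "D = {z. r z \<noteq> \<infinity>}"
  define R where "R z = real_of_ereal (r z)" for z
  define \<Phi> where "\<Phi> z = (norm (z - y))\<^sup>2 / 2 + \<eta> * R z" for z
  define \<delta> where "\<delta> = 1 - \<eta> * \<gamma>"
  define B where "B = norm (y + \<eta> *\<^sub>R p)"
  define C where "C = (norm y)\<^sup>2 / 2 + \<eta> * c0"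
  have rR: "r z = ereal (R z)" if "z \<in> D" for z
    using that pr unfolding D_def R_def proper_fun_def by (auto simp: ereal_real)
  have \<delta>: "\<delta> > 0" using gam by (simp add: \<delta>_def)
  have coercive: "\<delta> / 2 * (norm z)\<^sup>2 - B * norm z + C \<le> \<Phi> z" if "z \<in> D" for z
    using prox_objective_coercive[where r = r and z = z and y = y, OF eta lower[of z]] that
    unfolding \<delta>_def B_def C_def \<Phi>_def R_def D_def by simp
  have bdd: "bdd_below (\<Phi> ` D)"
  proof (rule bdd_belowI)
    fix v assume "v \<in> \<Phi> ` D"
    then obtain z where "z \<in> D" "v = \<Phi> z" by blast
    have "0 \<le> (\<delta> * norm z - B)\<^sup>2 / (2 * \<delta>)" using \<delta> by simp
    also have "\<dots> = \<delta> / 2 * (norm z)\<^sup>2 - B * norm z + B\<^sup>2 / (2 * \<delta>)"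
      using \<delta> by (simp add: power2_eq_square field_simps)
    finally show "C - B\<^sup>2 / (2 * \<delta>) \<le> v" using coercive[OF \<open>z \<in> D\<close>] \<open>v = \<Phi> z\<close> by linarith
  qed
  have ne: "\<Phi> ` D \<noteq> {}" using pr unfolding proper_fun_def D_def by auto
  define v where "v = Inf (\<Phi> ` D)"
  have v_le: "v \<le> \<Phi> z" if "z \<in> D" for z
    unfolding v_def using bdd that by (simp add: cInf_lower)
  have "\<exists>z. z \<in> D \<and> \<Phi> z < v + 1 / (real n + 1)" for n
    using cInf_less_iff[OF ne bdd, of "v + 1 / (real n + 1)"] unfolding v_def by auto
  then obtain zs where zs: "\<And>n. zs n \<in> D" "\<And>n. \<Phi> (zs n) < v + 1 / (real n + 1)"
    by metis
  have "norm (zs n) \<le> max 1 (2 * (\<bar>v + 1 - C\<bar> + \<bar>B\<bar>) / \<delta>)" for n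
  proof (rule quadratic_le_linear_bound[OF \<delta> norm_ge_zero])
    have "1 / (real n + 1) \<le> 1" by simp
    then show "\<delta> / 2 * (norm (zs n))\<^sup>2 \<le> v + 1 - C + B * norm (zs n)"
      using coercive[OF zs(1)[of n]] zs(2)[of n] by linarith
  qed
  then have "bounded (range zs)" unfolding bounded_iff by blast
  then obtain l \<sigma> where \<sigma>: "strict_mono \<sigma>" and lim: "(zs \<circ> \<sigma>) \<longlonglongrightarrow> l"
    using bounded_imp_convergent_subsequence by blast
  define t where "t n = (v + 1 / (real (\<sigma> n) + 1) - (norm (zs (\<sigma> n) - y))\<^sup>2 / 2) / \<eta>" for n
  have "r (zs (\<sigma> n)) \<le> ereal (t n)" for n
  proof -
    have "R (zs (\<sigma> n)) * \<eta> \<le> v + 1 / (real (\<sigma> n) + 1) - (norm (zs (\<sigma> n) - y))\<^sup>2 / 2"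
      using zs(2)[of "\<sigma> n"] unfolding \<Phi>_def by (simp add: mult.commute)
    then have "R (zs (\<sigma> n)) \<le> t n" unfolding t_def by (simp only: pos_le_divide_eq[OF eta])
    then show ?thesis using rR[OF zs(1)] by simp
  qed
  moreover have zs_lim: "(\<lambda>n. zs (\<sigma> n)) \<longlonglongrightarrow> l" using lim by (simp add: o_def)
  moreover have "t \<longlonglongrightarrow> (v + 0 - (norm (l - y))\<^sup>2 / 2) / \<eta>"
  proof -
    have "(\<lambda>n. 1 / (real (\<sigma> n) + 1)) \<longlonglongrightarrow> (0::real)"
      using LIMSEQ_subseq_LIMSEQ[OF LIMSEQ_inverse_real_of_nat \<sigma>]
      by (simp add: o_def inverse_eq_divide add.commute)
    then show ?thesis unfolding t_def using zs_lim eta by (intro tendsto_intros) auto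
  qed
  ultimately have "r l \<le> ereal ((v + 0 - (norm (l - y))\<^sup>2 / 2) / \<eta>)"
    by (rule closed_fun_limit_le[OF cl])
  then have rl: "r l \<le> ereal ((v - (norm (l - y))\<^sup>2 / 2) / \<eta>)" by simp
  then have l: "l \<in> D" unfolding D_def by auto
  have "\<Phi> l \<le> v" using rl rR[OF l] eta unfolding \<Phi>_def by (simp add: field_simps)
  then show ?thesis using that[of l] l v_le unfolding D_def \<Phi>_def R_def by fastforce
qed

lemma prox_eq_minimizer:
  fixes r :: "'a::real_inner \<Rightarrow> ereal"
  assumes pr: "proper_fun r" and cv: "convex_fun r" and eta: "\<eta> > 0" and l: "r l \<noteq> \<infinity>"
    and l_min: "\<And>z. r z \<noteq> \<infinity> \<Longrightarrow> (norm (l - y))\<^sup>2 / 2 + \<eta> * real_of_ereal (r l)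
                                       \<le> (norm (z - y))\<^sup>2 / 2 + \<eta> * real_of_ereal (r z)"
  shows "prox r \<eta> y = l"
proof -
  define D where "D = {z. r z \<noteq> \<infinity>}"
  define R where "R z = real_of_ereal (r z)" for z
  have R: "convex_on D R" unfolding D_def R_def by (rule convex_fun_real_part[OF cv pr])
  have rR: "r z = ereal (R z)" if "z \<in> D" for z
    using that pr unfolding D_def R_def proper_fun_def by (auto simp: ereal_real)
  have objective_le_iff: "ereal ((norm (w - y))\<^sup>2 / 2) + ereal \<eta> * r w \<le> ereal ((norm (z - y))\<^sup>2 / 2) + ereal \<eta> * r z
      \<longleftrightarrow> (norm (w - y))\<^sup>2 / 2 + \<eta> * R w \<le> (norm (z - y))\<^sup>2 / 2 + \<eta> * R z" if "w \<in> D" "z \<in> D" for w z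
    using rR[OF that(1)] rR[OF that(2)] by simp
  have l_is_prox: "ereal ((norm (l - y))\<^sup>2 / 2) + ereal \<eta> * r l \<le> ereal ((norm (z - y))\<^sup>2 / 2) + ereal \<eta> * r z" for z
  proof (cases "z \<in> D")
    case True
    then show ?thesis using objective_le_iff l l_min unfolding D_def R_def by auto
  qed (use eta l in \<open>auto simp: D_def\<close>)
  have "w = l" if w_is_prox: "\<forall>z. ereal ((norm (w - y))\<^sup>2 / 2) + ereal \<eta> * r w
                               \<le> ereal ((norm (z - y))\<^sup>2 / 2) + ereal \<eta> * r z" for w
  proof -
    have "l \<in> D" using l by (simp add: D_def)
    have "w \<in> D" using w_is_prox[rule_format, of l] rR[OF \<open>l \<in> D\<close>] eta
      unfolding D_def by (cases "r w") auto
    have "\<eta> * R w + (y - w) \<bullet> (l - w) \<le> \<eta> * R l"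
      using objective_le_iff w_is_prox \<open>w \<in> D\<close> \<open>l \<in> D\<close>
      by (intro proximal_minimizer_variational_ineq[OF R eta]) auto
    moreover have "\<eta> * R l + (y - l) \<bullet> (w - l) \<le> \<eta> * R w"
      using l_min \<open>w \<in> D\<close> \<open>l \<in> D\<close>
      by (intro proximal_minimizer_variational_ineq[OF R eta]) (auto simp: D_def R_def)
    moreover have "(y - w) \<bullet> (l - w) + (y - l) \<bullet> (w - l) = (l - w) \<bullet> (l - w)"
      by (simp add: inner_diff_left inner_diff_right inner_commute)
    ultimately have "(l - w) \<bullet> (l - w) \<le> 0" by linarith
    then show "w = l" by (metis inner_gt_zero_iff eq_iff_diff_eq_0 not_le)
  qed
  then show ?thesis
    unfolding prox_def using l_is_prox by (intro the_equality) auto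
qed

lemma prox_variational_ineq:
  fixes r :: "'a::euclidean_space \<Rightarrow> ereal"
  assumes pr: "proper_fun r" and cl: "closed_fun r" and cv: "convex_fun r"
    and eta: "\<eta> > 0" and gam: "\<eta> * \<gamma> < 1"
    and lower: "\<And>z. ereal (c0 - p \<bullet> z - \<gamma> / 2 * (norm z)\<^sup>2) \<le> r z"
  shows "r (prox r \<eta> y) \<noteq> \<infinity>"
    and "\<And>z. r z \<noteq> \<infinity> \<Longrightarrow> \<eta> * real_of_ereal (r (prox r \<eta> y)) + (y - prox r \<eta> y) \<bullet> (z - prox r \<eta> y)
                              \<le> \<eta> * real_of_ereal (r z)"
proof -
  obtain l where l: "r l \<noteq> \<infinity>"
    and l_min: "\<And>z. r z \<noteq> \<infinity> \<Longrightarrow> (norm (l - y))\<^sup>2 / 2 + \<eta> * real_of_ereal (r l)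
                                    \<le> (norm (z - y))\<^sup>2 / 2 + \<eta> * real_of_ereal (r z)"
    using prox_objective_has_minimizer[OF pr cl eta gam lower] by blast
  have prox: "prox r \<eta> y = l" by (rule prox_eq_minimizer[OF pr cv eta l l_min])
  show "r (prox r \<eta> y) \<noteq> \<infinity>" using l prox by simp
  show "\<eta> * real_of_ereal (r (prox r \<eta> y)) + (y - prox r \<eta> y) \<bullet> (z - prox r \<eta> y) \<le> \<eta> * real_of_ereal (r z)"
    if "r z \<noteq> \<infinity>" for z
    unfolding prox using l l_min that
    by (intro proximal_minimizer_variational_ineq[OF convex_fun_real_part[OF cv pr] eta]) auto
qed

lemma inner_le_young:
  fixes a b :: "'a::real_inner"
  assumes c: "c > 0"
  shows "a \<bullet> b \<le> c / 2 * (norm a)\<^sup>2 + (norm b)\<^sup>2 / (2 * c)"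
proof -
  have "0 \<le> (norm (c *\<^sub>R a - b))\<^sup>2 / (2 * c)" using c by simp
  also have "(norm (c *\<^sub>R a - b))\<^sup>2 = c\<^sup>2 * (norm a)\<^sup>2 - 2 * c * (a \<bullet> b) + (norm b)\<^sup>2"
    unfolding power2_norm_eq_inner by (simp add: inner_commute algebra_simps power2_eq_square)
  finally show ?thesis using c by (simp add: field_simps power2_eq_square)
qed

text \<open>The step is compared with the point on the segment from the iterate to the minimizer at
  parameter \<eta>\<mu>; the cross terms are absorbed by Young's inequality and by quadratic growth.\<close>
lemma inexact_prox_grad_step:
  fixes f :: "'a::real_inner \<Rightarrow> real" and G :: "'a \<Rightarrow> 'a"
  assumes der: "\<And>z. (f has_derivative (\<lambda>h. G z \<bullet> h)) (at z)"
    and lip: "\<And>y z. norm (G y - G z) \<le> L * norm (y - z)"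
    and conv: "convex_on UNIV (\<lambda>z. f z - \<mu> / 2 * (norm z)\<^sup>2)"
    and R: "convex_on D R" and eta: "\<eta> > 0" and mu: "\<mu> > 0" and eta_mu: "\<eta> * \<mu> \<le> 1"
    and xs: "xs \<in> D" and xs_min: "\<And>z. z \<in> D \<Longrightarrow> f xs + R xs \<le> f z + R z"
    and xk: "xk \<in> D"
    and opt: "\<And>z. z \<in> D \<Longrightarrow> \<eta> * R xk1 + ((xk - \<eta> *\<^sub>R g) - xk1) \<bullet> (z - xk1) \<le> \<eta> * R z"
  shows "f xk1 + R xk1 - (f xs + R xs) \<le> (1 - \<eta> * \<mu> / 2) * (f xk + R xk - (f xs + R xs))
           + 2 * \<eta> * (norm (g - G xk))\<^sup>2 - (1 / (4 * \<eta>) - L / 2) * (norm (xk1 - xk))\<^sup>2"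
proof -
  define t where "t = \<eta> * \<mu>"
  define u where "u = xk - xs"
  define \<Delta> where "\<Delta> = xk1 - xk"
  define e where "e = g - G xk"
  define z where "z = (1 - t) *\<^sub>R xk + t *\<^sub>R xs"
  define gap where "gap = f xk + R xk - (f xs + R xs)"
  define \<omega> where "\<omega> = (norm \<Delta>)\<^sup>2 / \<eta>"
  have t: "0 \<le> t" "t \<le> 1" using eta mu eta_mu by (simp_all add: t_def)
  have t_eta: "t * t / \<eta> = \<mu> * t" using eta by (simp add: t_def)
  have z: "z \<in> D" using convexD_alt[OF convex_on_imp_convex[OF R] xk xs t] by (simp add: z_def)
  have prox_step: "R xk1 \<le> R z - t * (G xk \<bullet> u) - G xk \<bullet> \<Delta> - t * (e \<bullet> u) - e \<bullet> \<Delta> - \<mu> * (\<Delta> \<bullet> u) - \<omega>"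
  proof -
    have "((xk - \<eta> *\<^sub>R g) - xk1) \<bullet> (z - xk1)
        = \<eta> * (t * (G xk \<bullet> u) + G xk \<bullet> \<Delta> + t * (e \<bullet> u) + e \<bullet> \<Delta> + \<mu> * (\<Delta> \<bullet> u)) + (norm \<Delta>)\<^sup>2"
      unfolding z_def u_def \<Delta>_def e_def t_def power2_norm_eq_inner
      by (simp add: inner_commute algebra_simps)
    moreover have "(norm \<Delta>)\<^sup>2 = \<eta> * \<omega>" using eta by (simp add: \<omega>_def)
    ultimately have "\<eta> * (R xk1 + t * (G xk \<bullet> u) + G xk \<bullet> \<Delta> + t * (e \<bullet> u) + e \<bullet> \<Delta> + \<mu> * (\<Delta> \<bullet> u) + \<omega>) \<le> \<eta> * R z"
      using opt[OF z] by (simp add: algebra_simps)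
    then show ?thesis using eta by (simp only: mult_le_cancel_left_pos)
  qed
  have descent: "f xk1 \<le> f xk + G xk \<bullet> \<Delta> + L / 2 * (norm \<Delta>)\<^sup>2"
    unfolding \<Delta>_def by (rule lipschitz_gradient_upper_bound[OF der lip])
  have "f xk + G xk \<bullet> (z - xk) + \<mu> / 2 * (norm (z - xk))\<^sup>2 \<le> f z"
    by (rule strongly_convex_gradient_lower_bound[OF der conv])
  moreover have "z - xk = - (t *\<^sub>R u)" by (simp add: z_def u_def algebra_simps)
  ultimately have strong: "f xk - t * (G xk \<bullet> u) + \<mu> * t * t / 2 * (norm u)\<^sup>2 \<le> f z"
    using t by (simp add: power_mult_distrib power2_eq_square mult_ac)
  have "R z \<le> (1 - t) * R xk + t * R xs"
    using convex_onD[OF R t xk xs] by (simp add: z_def)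
  moreover have "f z \<le> (1 - t) * f xk + t * f xs - \<mu> / 2 * (t * (1 - t)) * (norm u)\<^sup>2"
    unfolding z_def u_def by (rule strongly_convex_combination_le[OF conv t])
  ultimately have segment: "f z + R z \<le> f xs + R xs + gap - t * gap - \<mu> * t / 2 * (norm u)\<^sup>2 + \<mu> * t * t / 2 * (norm u)\<^sup>2"
    unfolding gap_def by (simp add: algebra_simps diff_divide_distrib)
  have young1: "- \<mu> * (\<Delta> \<bullet> u) \<le> \<omega> / 2 + \<mu> * t / 2 * (norm u)\<^sup>2"
    using inner_le_young[of "1 / \<eta>" "- \<Delta>" "\<mu> *\<^sub>R u"] eta
    by (simp add: \<omega>_def t_def power2_eq_square field_simps)
  have "(norm (- t *\<^sub>R u))\<^sup>2 / (2 * (2 * \<eta>)) = t * t / \<eta> * (norm u)\<^sup>2 / 4"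
    using t by (simp add: power_mult_distrib power2_eq_square mult_ac)
  then have young2: "- t * (e \<bullet> u) \<le> \<eta> * (norm e)\<^sup>2 + \<mu> * t / 4 * (norm u)\<^sup>2"
    using inner_le_young[of "2 * \<eta>" e "- t *\<^sub>R u"] eta unfolding t_eta by simp
  have young3: "- (e \<bullet> \<Delta>) \<le> \<eta> * (norm e)\<^sup>2 + \<omega> / 4"
    using inner_le_young[of "2 * \<eta>" e "- \<Delta>"] eta by (simp add: \<omega>_def field_simps)
  have "\<mu> / 2 * (norm u)\<^sup>2 \<le> gap"
    unfolding u_def gap_def by (rule minimizer_quadratic_growth[OF conv R xs xs_min xk])
  then have growth: "\<mu> * t / 4 * (norm u)\<^sup>2 \<le> t / 2 * gap"
    using mult_left_mono[of "\<mu> / 2 * (norm u)\<^sup>2" gap "t / 2"] t by (simp add: algebra_simps)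
  have "f xk1 + R xk1 - (f xs + R xs) \<le> gap - t / 2 * gap + 2 * (\<eta> * (norm e)\<^sup>2) - \<omega> / 4 + L / 2 * (norm \<Delta>)\<^sup>2"
    using prox_step descent strong segment young1 young2 young3 growth by linarith
  moreover have "\<omega> / 4 = 1 / (4 * \<eta>) * (norm \<Delta>)\<^sup>2" by (simp add: \<omega>_def)
  ultimately show ?thesis unfolding gap_def e_def \<Delta>_def t_def by (simp add: algebra_simps)
qed

lemma window_weighted_sum_Suc:
  fixes d :: "nat \<Rightarrow> real"
  shows "(\<Sum>j\<in>{Suc k - K..<Suc k}. (real j + real K + 1 - real (Suc k)) * d j)
       = (\<Sum>j\<in>{k - K..<k}. (real j + real K + 1 - real k) * d j) - (\<Sum>j\<in>{k - K..<k}. d j) + real K * d k"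
proof -
  define w where "w j = (real j + real K - real k) * d j" for j
  have "(\<Sum>j\<in>{k - K..<Suc k}. w j) = (\<Sum>j\<in>{Suc k - K..<Suc k}. w j)"
  proof (cases "K \<le> k")
    case True
    then have "{k - K..<Suc k} = insert (k - K) {Suc k - K..<Suc k}" "k - K \<notin> {Suc k - K..<Suc k}"
      by auto
    moreover have "w (k - K) = 0" using True by (simp add: w_def)
    ultimately show ?thesis by simp
  next
    case False
    then have "k - K = Suc k - K" by simp
    then show ?thesis by simp
  qed
  moreover have "(\<Sum>j\<in>{k - K..<Suc k}. w j) = (\<Sum>j\<in>{k - K..<k}. w j) + real K * d k"
    unfolding w_def by (subst sum.atLeastLessThan_Suc) auto
  moreover have "(\<Sum>j\<in>{k - K..<k}. w j)
      = (\<Sum>j\<in>{k - K..<k}. (real j + real K + 1 - real k) * d j) - (\<Sum>j\<in>{k - K..<k}. d j)"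
    by (simp add: w_def sum_subtractf[symmetric] algebra_simps)
  moreover have "(\<Sum>j\<in>{Suc k - K..<Suc k}. (real j + real K + 1 - real (Suc k)) * d j)
      = (\<Sum>j\<in>{Suc k - K..<Suc k}. w j)"
    unfolding w_def by (intro sum.cong) auto
  ultimately show ?thesis by simp
qed

text \<open>The delayed terms are absorbed by a Lyapunov function that adds to F the recent increments
  d j, each weighted by the number of further steps during which it stays in the delay window.\<close>
lemma delayed_recursion_geometric_decay:
  fixes F d :: "nat \<Rightarrow> real"
  assumes rec: "\<And>k. F (Suc k) \<le> (1 - t / 2) * F k + C / 2 * (\<Sum>j\<in>{k - K..<k}. d j) - C * real K * d k"
    and d: "\<And>j. d j \<ge> 0" and C: "C \<ge> 0"
    and t: "0 \<le> t" "t \<le> 2" "t * real K \<le> 1"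
  shows "F k \<le> (1 - t / 2) ^ k * F 0"
proof -
  define S where "S k = (\<Sum>j\<in>{k - K..<k}. (real j + real K + 1 - real k) * d j)" for k
  define V where "V k = F k + C * S k" for k
  have weight: "1 \<le> real j + real K + 1 - real k \<and> real j + real K + 1 - real k \<le> real K"
    if "j \<in> {k - K..<k}" for j k
    using that by auto
  have S_nonneg: "0 \<le> S k" for k
    unfolding S_def using weight d by (intro sum_nonneg mult_nonneg_nonneg) fastforce+
  have S_le: "t / 2 * S k \<le> 1 / 2 * (\<Sum>j\<in>{k - K..<k}. d j)" for k
    unfolding S_def sum_distrib_left
  proof (rule sum_mono)
    fix j assume "j \<in> {k - K..<k}"
    then have weighted: "t * (real j + real K + 1 - real k) \<le> 1"
      using weight[of j k] t mult_left_mono[of _ "real K" t] by fastforce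
    then show "t / 2 * ((real j + real K + 1 - real k) * d j) \<le> 1 / 2 * d j"
      using mult_right_mono[OF weighted d[of j]] by (simp add: algebra_simps)
  qed
  have V_step: "V (Suc k) \<le> (1 - t / 2) * V k" for k
  proof -
    have "S (Suc k) = S k - (\<Sum>j\<in>{k - K..<k}. d j) + real K * d k"
      unfolding S_def by (rule window_weighted_sum_Suc)
    then have "C * S (Suc k) = C * S k - C * (\<Sum>j\<in>{k - K..<k}. d j) + C * real K * d k"
      by (simp add: right_diff_distrib distrib_left mult.assoc)
    then have "V (Suc k) \<le> (1 - t / 2) * F k + C * S k - C / 2 * (\<Sum>j\<in>{k - K..<k}. d j)"
      using rec[of k] unfolding V_def by (simp add: algebra_simps)
    also have "\<dots> \<le> (1 - t / 2) * V k"
      using mult_left_mono[OF S_le C] unfolding V_def by (simp add: algebra_simps)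
    finally show ?thesis .
  qed
  have "V k \<le> (1 - t / 2) ^ k * V 0"
  proof (induction k)
    case (Suc k)
    then show ?case
      using V_step[of k] mult_left_mono[OF Suc, of "1 - t / 2"] t by simp
  qed simp
  moreover have "V 0 = F 0" by (simp add: V_def S_def)
  moreover have "F k \<le> V k" using S_nonneg C by (simp add: V_def)
  ultimately show ?thesis by simp
qed

lemma norm_diff_le_window_increments:
  fixes x :: "nat \<Rightarrow> 'a::real_normed_vector"
  assumes "k - K \<le> \<tau>" "\<tau> \<le> k"
  shows "norm (x \<tau> - x k) \<le> (\<Sum>j\<in>{k - K..<k}. norm (x (Suc j) - x j))"
proof -
  have "norm (x \<tau> - x k) = norm (\<Sum>j\<in>{\<tau>..<k}. x (Suc j) - x j)"
    using sum_Suc_diff'[OF assms(2), of x] by (metis norm_minus_commute)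
  also have "\<dots> \<le> (\<Sum>j\<in>{\<tau>..<k}. norm (x (Suc j) - x j))" by (rule norm_sum)
  also have "\<dots> \<le> (\<Sum>j\<in>{k - K..<k}. norm (x (Suc j) - x j))"
    using assms by (intro sum_mono2) auto
  finally show ?thesis .
qed

lemma sq_le_window_sum_sq:
  fixes s :: "nat \<Rightarrow> real"
  assumes "0 \<le> e" "e \<le> L * (\<Sum>j\<in>{k - K..<k}. s j)" "L \<ge> 0"
  shows "e\<^sup>2 \<le> L\<^sup>2 * real K * (\<Sum>j\<in>{k - K..<k}. (s j)\<^sup>2)"
proof -
  have "e\<^sup>2 \<le> L\<^sup>2 * (\<Sum>j\<in>{k - K..<k}. s j)\<^sup>2"
    using assms power_mono[of e "L * (\<Sum>j\<in>{k - K..<k}. s j)" 2] by (simp add: power_mult_distrib)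
  also have "\<dots> \<le> L\<^sup>2 * ((\<Sum>j\<in>{k - K..<k}. (s j)\<^sup>2) * real (card {k - K..<k}))"
    by (intro mult_left_mono sum_squared_le_sum_of_squares) auto
  also have "\<dots> \<le> L\<^sup>2 * ((\<Sum>j\<in>{k - K..<k}. (s j)\<^sup>2) * real K)"
    by (intro mult_left_mono) (auto intro!: sum_nonneg)
  finally show ?thesis by (simp add: algebra_simps)
qed

lemma quadratic_minorant_of_minimizer:
  fixes f :: "'a::real_inner \<Rightarrow> real" and G :: "'a \<Rightarrow> 'a" and r :: "'a \<Rightarrow> ereal"
  assumes der: "\<And>z. (f has_derivative (\<lambda>h. G z \<bullet> h)) (at z)"
    and lip: "\<And>y z. norm (G y - G z) \<le> L * norm (y - z)" and L: "L \<ge> 0"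
    and pr: "proper_fun r" and xs_fin: "r xs \<noteq> \<infinity>" and xs_min: "\<And>z. ereal (f xs) + r xs \<le> ereal (f z) + r z"
  shows "\<exists>c0. \<forall>z. ereal (c0 - G xs \<bullet> z - (2 * L) / 2 * (norm z)\<^sup>2) \<le> r z"
proof (intro exI allI)
  fix z
  define c0 where "c0 = real_of_ereal (r xs) + G xs \<bullet> xs - L * (norm xs)\<^sup>2"
  show "ereal (c0 - G xs \<bullet> z - (2 * L) / 2 * (norm z)\<^sup>2) \<le> r z"
  proof (cases "r z = \<infinity>")
    case False
    have "(norm (z - xs))\<^sup>2 \<le> 2 * (norm z)\<^sup>2 + 2 * (norm xs)\<^sup>2"
      using zero_le_power2[of "norm (z + xs)"] unfolding power2_norm_eq_inner
      by (simp add: inner_add_left inner_add_right inner_diff_left inner_diff_right inner_commute)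
    then have "L / 2 * (norm (z - xs))\<^sup>2 \<le> L / 2 * (2 * (norm z)\<^sup>2 + 2 * (norm xs)\<^sup>2)"
      using L by (intro mult_left_mono) auto
    then have "f z \<le> f xs + G xs \<bullet> (z - xs) + L * ((norm z)\<^sup>2 + (norm xs)\<^sup>2)"
      using lipschitz_gradient_upper_bound[OF der lip, of z xs] by (simp add: algebra_simps)
    moreover have "f xs + real_of_ereal (r xs) \<le> f z + real_of_ereal (r z)"
      using xs_min[of z] xs_fin False pr unfolding proper_fun_def by (cases "r xs"; cases "r z") auto
    ultimately have "c0 - G xs \<bullet> z - (2 * L) / 2 * (norm z)\<^sup>2 \<le> real_of_ereal (r z)"
      unfolding c0_def by (simp add: algebra_simps)
    moreover have "r z \<noteq> -\<infinity>" using pr unfolding proper_fun_def by auto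
    ultimately show ?thesis using False by (cases "r z") auto
  qed simp
qed

lemma prox_step_variational_ineq:
  fixes f :: "'a::euclidean_space \<Rightarrow> real" and G :: "'a \<Rightarrow> 'a" and r :: "'a \<Rightarrow> ereal"
  assumes der: "\<And>z. (f has_derivative (\<lambda>h. G z \<bullet> h)) (at z)"
    and lip: "\<And>y z. norm (G y - G z) \<le> L * norm (y - z)" and L: "L \<ge> 0"
    and pr: "proper_fun r" and cl: "closed_fun r" and cv: "convex_fun r"
    and eta: "\<eta> > 0" and eta_L: "\<eta> * L < 1 / 2"
    and xs_fin: "r xs \<noteq> \<infinity>" and xs_min: "\<And>z. ereal (f xs) + r xs \<le> ereal (f z) + r z"
  shows "r (prox r \<eta> y) \<noteq> \<infinity>"
    and "\<And>z. r z \<noteq> \<infinity> \<Longrightarrow> \<eta> * real_of_ereal (r (prox r \<eta> y)) + (y - prox r \<eta> y) \<bullet> (z - prox r \<eta> y)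
                              \<le> \<eta> * real_of_ereal (r z)"
proof -
  obtain c0 where "\<And>z. ereal (c0 - G xs \<bullet> z - (2 * L) / 2 * (norm z)\<^sup>2) \<le> r z"
    using quadratic_minorant_of_minimizer[OF der lip L pr xs_fin xs_min] by blast
  moreover have "\<eta> * (2 * L) < 1" using eta_L by simp
  ultimately show "r (prox r \<eta> y) \<noteq> \<infinity>"
    and "\<And>z. r z \<noteq> \<infinity> \<Longrightarrow> \<eta> * real_of_ereal (r (prox r \<eta> y)) + (y - prox r \<eta> y) \<bullet> (z - prox r \<eta> y)
                              \<le> \<eta> * real_of_ereal (r z)"
    using prox_variational_ineq[OF pr cl cv eta] by blast+
qed

lemma delay_penalty_le_step_bonus:
  fixes \<eta> L :: real
  assumes eta: "\<eta> > 0" and L: "L \<ge> 0" and small: "\<eta> * L \<le> 1 / 9" "\<eta> * L * real K \<le> 1 / 9"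
  shows "4 * \<eta> * L\<^sup>2 * real K * real K \<le> 1 / (4 * \<eta>) - L / 2"
proof -
  have "\<eta> * (4 * \<eta> * L\<^sup>2 * real K * real K) = 4 * (\<eta> * L * real K)\<^sup>2"
    by (simp add: power2_eq_square)
  also have "\<dots> \<le> 4 * (1 / 9)\<^sup>2"
    using small eta L by (intro mult_left_mono power_mono) auto
  also have "\<dots> \<le> \<eta> * (1 / (4 * \<eta>) - L / 2)"
    using small eta by (simp add: algebra_simps power2_eq_square)
  finally show ?thesis using eta by (simp add: mult_le_cancel_left_pos)
qed

lemma small_step_size_consequences:
  fixes \<eta> \<mu> L :: real
  assumes eta: "\<eta> > 0" and mu: "\<mu> > 0" and mu_L: "\<mu> \<le> L"
    and step_size: "\<eta> * L * (real K + 1) \<le> 1 / 9"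
  shows "\<eta> * L \<le> 1 / 9" "\<eta> * L * real K \<le> 1 / 9" "\<eta> * \<mu> \<le> 1 / 9" "\<eta> * \<mu> * real K \<le> 1 / 9"
proof -
  have "0 \<le> \<eta> * L" "0 \<le> \<eta> * L * real K" using eta mu mu_L by simp_all
  moreover have "\<eta> * L * (real K + 1) = \<eta> * L * real K + \<eta> * L" by (simp add: algebra_simps)
  ultimately show L: "\<eta> * L \<le> 1 / 9" "\<eta> * L * real K \<le> 1 / 9" using step_size by linarith+
  have "\<eta> * \<mu> \<le> \<eta> * L" using mu_L eta by simp
  moreover from this have "\<eta> * \<mu> * real K \<le> \<eta> * L * real K" by (rule mult_right_mono) simp
  ultimately show "\<eta> * \<mu> \<le> 1 / 9" "\<eta> * \<mu> * real K \<le> 1 / 9" using L by linarith+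
qed

lemma inexact_prox_grad_gap_decay:
  fixes f R :: "'a::real_inner \<Rightarrow> real" and G :: "'a \<Rightarrow> 'a" and x g :: "nat \<Rightarrow> 'a"
  assumes der: "\<And>z. (f has_derivative (\<lambda>h. G z \<bullet> h)) (at z)"
    and lip: "\<And>y z. norm (G y - G z) \<le> L * norm (y - z)"
    and conv: "convex_on UNIV (\<lambda>z. f z - \<mu> / 2 * (norm z)\<^sup>2)" and R: "convex_on D R"
    and mu: "\<mu> > 0" and mu_L: "\<mu> \<le> L"
    and eta: "\<eta> > 0" and step_size: "\<eta> * L * (real K + 1) \<le> 1 / 9"
    and xs: "xs \<in> D" and xs_min: "\<And>z. z \<in> D \<Longrightarrow> f xs + R xs \<le> f z + R z"
    and x: "\<And>k. x k \<in> D"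
    and opt: "\<And>k z. z \<in> D \<Longrightarrow> \<eta> * R (x (Suc k)) + ((x k - \<eta> *\<^sub>R g k) - x (Suc k)) \<bullet> (z - x (Suc k)) \<le> \<eta> * R z"
    and err: "\<And>k. norm (g k - G (x k)) \<le> L * (\<Sum>j\<in>{k - K..<k}. norm (x (Suc j) - x j))"
  shows "f (x k) + R (x k) - (f xs + R xs) \<le> (1 - \<eta> * \<mu> / 2) ^ k * (f (x 0) + R (x 0) - (f xs + R xs))"
proof -
  note small = small_step_size_consequences[OF eta mu mu_L step_size]
  have L: "L > 0" using mu mu_L by simp
  define gap where "gap k = f (x k) + R (x k) - (f xs + R xs)" for k
  define d where "d j = (norm (x (Suc j) - x j))\<^sup>2" for j
  define C where "C = 4 * \<eta> * L\<^sup>2 * real K"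
  have rec: "gap (Suc k) \<le> (1 - \<eta> * \<mu> / 2) * gap k + C / 2 * (\<Sum>j\<in>{k - K..<k}. d j) - C * real K * d k"
    for k
  proof -
    have "gap (Suc k) \<le> (1 - \<eta> * \<mu> / 2) * gap k + 2 * \<eta> * (norm (g k - G (x k)))\<^sup>2
        - (1 / (4 * \<eta>) - L / 2) * d k"
      unfolding gap_def d_def using small
      by (intro inexact_prox_grad_step[OF der lip conv R eta mu _ xs xs_min x opt]) auto
    moreover have "2 * \<eta> * (norm (g k - G (x k)))\<^sup>2 \<le> C / 2 * (\<Sum>j\<in>{k - K..<k}. d j)"
      using sq_le_window_sum_sq[OF norm_ge_zero err] L eta
      mult_left_mono[of _ _ "2 * \<eta>"] unfolding C_def d_def by (simp add: algebra_simps)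
    moreover have "C * real K * d k \<le> (1 / (4 * \<eta>) - L / 2) * d k"
      using delay_penalty_le_step_bonus[OF eta _ small(1,2)] L
      by (intro mult_right_mono) (simp_all add: C_def d_def)
    ultimately show ?thesis by linarith
  qed
  have "gap k \<le> (1 - \<eta> * \<mu> / 2) ^ k * gap 0"
    using small eta mu L by (intro delayed_recursion_geometric_decay[OF rec]) (auto simp: d_def C_def)
  then show ?thesis unfolding gap_def .
qed

lemma inexact_prox_grad_linear_rate:
  fixes f :: "'a::euclidean_space \<Rightarrow> real" and G :: "'a \<Rightarrow> 'a" and r :: "'a \<Rightarrow> ereal"
    and x g :: "nat \<Rightarrow> 'a"
  assumes der: "\<And>z. (f has_derivative (\<lambda>h. G z \<bullet> h)) (at z)"
    and lip: "\<And>y z. norm (G y - G z) \<le> L * norm (y - z)"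
    and conv: "convex_on UNIV (\<lambda>z. f z - \<mu> / 2 * (norm z)\<^sup>2)"
    and pr: "proper_fun r" and cl: "closed_fun r" and cv: "convex_fun r"
    and mu: "\<mu> > 0" and mu_L: "\<mu> \<le> L"
    and eta: "\<eta> > 0" and step_size: "\<eta> * L * (real K + 1) \<le> 1 / 9"
    and xs_min: "\<And>z. ereal (f xs) + r xs \<le> ereal (f z) + r z"
    and step: "\<And>k. x (Suc k) = prox r \<eta> (x k - \<eta> *\<^sub>R g k)"
    and err: "\<And>k. norm (g k - G (x k)) \<le> L * (\<Sum>j\<in>{k - K..<k}. norm (x (Suc j) - x j))"
  shows "ereal (f (x k)) + r (x k) - (ereal (f xs) + r xs)
    \<le> ereal ((1 - \<eta> * \<mu> / 2) ^ k) * (ereal (f (x 0)) + r (x 0) - (ereal (f xs) + r xs))"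
proof -
  define D where "D = {z. r z \<noteq> \<infinity>}"
  define R where "R z = real_of_ereal (r z)" for z
  note small = small_step_size_consequences[OF eta mu mu_L step_size]
  have rR: "r z = ereal (R z)" if "z \<in> D" for z
    using that pr unfolding D_def R_def proper_fun_def by (auto simp: ereal_real)
  obtain z0 where z0: "z0 \<in> D" using pr unfolding proper_fun_def D_def by auto
  have xs: "xs \<in> D"
  proof (rule ccontr)
    assume "xs \<notin> D"
    then have "\<infinity> \<le> ereal (f z0 + R z0)" using xs_min[of z0] rR[OF z0] by (simp add: D_def)
    then show False by simp
  qed
  have L: "L \<ge> 0" and eta_L: "\<eta> * L < 1 / 2" and xs_fin: "r xs \<noteq> \<infinity>"
    using mu mu_L small xs by (simp_all add: D_def)
  note prox = prox_step_variational_ineq[OF der lip L pr cl cv eta eta_L xs_fin xs_min]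
  show ?thesis
  proof (cases "x 0 \<in> D")
    case False
    define q where "q = (1 - \<eta> * \<mu> / 2) ^ k"
    have "q > 0" using small by (simp add: q_def)
    then show ?thesis unfolding q_def[symmetric] using False rR[OF xs] by (simp add: D_def)
  next
    case True
    have x: "x k \<in> D" for k
    proof (cases k)
      case (Suc j)
      then show ?thesis using prox(1) by (simp add: D_def step)
    qed (use True in simp)
    have "f (x k) + R (x k) - (f xs + R xs) \<le> (1 - \<eta> * \<mu> / 2) ^ k * (f (x 0) + R (x 0) - (f xs + R xs))"
    proof (rule inexact_prox_grad_gap_decay[OF der lip conv _ mu mu_L eta step_size xs _ x _ err])
      show "convex_on D R" unfolding D_def R_def by (rule convex_fun_real_part[OF cv pr])
      show "f xs + R xs \<le> f z + R z" if "z \<in> D" for z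
        using xs_min[of z] rR[OF xs] rR[OF that] by simp
      show "\<eta> * R (x (Suc k)) + ((x k - \<eta> *\<^sub>R g k) - x (Suc k)) \<bullet> (z - x (Suc k)) \<le> \<eta> * R z"
        if "z \<in> D" for k z
        using that unfolding D_def R_def step by (intro prox(2)) simp
    qed
    then show ?thesis using rR[OF x] rR[OF xs] by simp
  qed
qed

lemma scaled_sum_gradient_deviation:
  fixes gf :: "nat \<Rightarrow> 'a::real_normed_vector \<Rightarrow> 'a"
  assumes lip: "\<And>i y z. i \<in> I \<Longrightarrow> norm (gf i y - gf i z) \<le> Li i * norm (y - z)" and c: "c \<ge> 0"
  shows "norm (c *\<^sub>R (\<Sum>i\<in>I. gf i (p i)) - c *\<^sub>R (\<Sum>i\<in>I. gf i q))
    \<le> c * (\<Sum>i\<in>I. Li i * norm (p i - q))"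
proof -
  have "norm (c *\<^sub>R (\<Sum>i\<in>I. gf i (p i)) - c *\<^sub>R (\<Sum>i\<in>I. gf i q)) = c * norm (\<Sum>i\<in>I. gf i (p i) - gf i q)"
    using c by (simp add: scaleR_diff_right[symmetric] sum_subtractf)
  also have "\<dots> \<le> c * (\<Sum>i\<in>I. norm (gf i (p i) - gf i q))"
    using c by (intro mult_left_mono norm_sum)
  also have "\<dots> \<le> c * (\<Sum>i\<in>I. Li i * norm (p i - q))"
    using c lip by (intro mult_left_mono sum_mono) auto
  finally show ?thesis .
qed

lemma scaled_sum_delayed_gradient_error:
  fixes gf :: "nat \<Rightarrow> 'a::real_normed_vector \<Rightarrow> 'a" and x :: "nat \<Rightarrow> 'a"
  assumes lip: "\<And>i y z. i \<in> I \<Longrightarrow> norm (gf i y - gf i z) \<le> Li i * norm (y - z)"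
    and Li: "\<And>i. i \<in> I \<Longrightarrow> Li i \<ge> 0" and c: "c \<ge> 0"
    and tau: "\<And>i. i \<in> I \<Longrightarrow> k - K \<le> \<tau> i \<and> \<tau> i \<le> k"
  shows "norm (c *\<^sub>R (\<Sum>i\<in>I. gf i (x (\<tau> i))) - c *\<^sub>R (\<Sum>i\<in>I. gf i (x k)))
    \<le> c * (\<Sum>i\<in>I. Li i) * (\<Sum>j\<in>{k - K..<k}. norm (x (Suc j) - x j))"
proof -
  have "norm (c *\<^sub>R (\<Sum>i\<in>I. gf i (x (\<tau> i))) - c *\<^sub>R (\<Sum>i\<in>I. gf i (x k)))
      \<le> c * (\<Sum>i\<in>I. Li i * norm (x (\<tau> i) - x k))"
    by (rule scaled_sum_gradient_deviation[OF lip c])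
  also have "\<dots> \<le> c * (\<Sum>i\<in>I. Li i * (\<Sum>j\<in>{k - K..<k}. norm (x (Suc j) - x j)))"
    using tau Li c by (intro mult_left_mono sum_mono norm_diff_le_window_increments) auto
  finally show ?thesis by (simp add: sum_distrib_right mult.assoc)
qed

lemma scaled_sum_has_derivative:
  assumes "\<And>i. i \<in> I \<Longrightarrow> (fi i has_derivative (\<lambda>h. gf i z \<bullet> h)) (at z)"
  shows "((\<lambda>z. c * (\<Sum>i\<in>I. fi i z)) has_derivative (\<lambda>h. (c *\<^sub>R (\<Sum>i\<in>I. gf i z)) \<bullet> h)) (at z)"
proof -
  have "((\<lambda>z. c * (\<Sum>i\<in>I. fi i z)) has_derivative (\<lambda>h. c * (\<Sum>i\<in>I. gf i z \<bullet> h))) (at z)"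
    using assms by (intro has_derivative_mult_right has_derivative_sum) auto
  then show ?thesis by (simp add: inner_sum_left)
qed

lemma strong_convexity_le_smoothness:
  fixes f :: "'a::euclidean_space \<Rightarrow> real"
  assumes der: "\<And>z. (f has_derivative (\<lambda>h. G z \<bullet> h)) (at z)"
    and lip: "\<And>y z. norm (G y - G z) \<le> L * norm (y - z)"
    and conv: "convex_on UNIV (\<lambda>z. f z - \<mu> / 2 * (norm z)\<^sup>2)"
  shows "\<mu> \<le> L"
proof -
  obtain b :: 'a where "b \<in> Basis" using nonempty_Basis by blast
  then have "norm b = 1" by simp
  moreover have "f 0 + G 0 \<bullet> (b - 0) + \<mu> / 2 * (norm (b - 0))\<^sup>2 \<le> f b"
    by (rule strongly_convex_gradient_lower_bound[OF der conv])
  moreover have "f b \<le> f 0 + G 0 \<bullet> (b - 0) + L / 2 * (norm (b - 0))\<^sup>2"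
    by (rule lipschitz_gradient_upper_bound[OF der lip])
  ultimately show ?thesis by simp
qed

text \<open>Raising 1/y to the power 2/\<lceil>ln y\<rceil> loses at most a factor e^2: this is where the
  constant 54 e^2 comes from.\<close>
lemma inverse_powr_ceiling_ln_bounds:
  fixes y :: real
  assumes y: "y > 1"
  shows "exp (- 2) \<le> (1 / y) powr (2 / real_of_int \<lceil>ln y\<rceil>)"
    and "(1 / y) powr (2 / real_of_int \<lceil>ln y\<rceil>) \<le> 1"
proof -
  define n where "n = real_of_int \<lceil>ln y\<rceil>"
  have ln_pos: "ln y > 0" using y by simp
  have n: "ln y \<le> n" "1 \<le> n" using ln_pos unfolding n_def
    by (simp, smt (verit) one_le_ceiling of_int_1_le_iff)
  have eq: "(1 / y) powr (2 / n) = exp (- (2 * ln y / n))"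
    using y by (simp add: powr_def ln_div)
  have "2 * ln y / n \<le> 2" "0 \<le> 2 * ln y / n" using n ln_pos by (simp_all add: divide_le_eq)
  then show "exp (- 2) \<le> (1 / y) powr (2 / n)" "(1 / y) powr (2 / n) \<le> 1"
    unfolding eq by simp_all
qed

lemma geometric_decay_below_eps:
  fixes s N g0 c \<epsilon> :: real
  assumes s: "0 \<le> s" "s \<le> 1" "1 \<le> s * N" and g0: "0 \<le> g0" "g0 \<le> c" and eps: "\<epsilon> > 0"
    and k: "c \<le> \<epsilon> \<or> N * ln (c / \<epsilon>) \<le> real k"
  shows "(1 - s) ^ k * g0 \<le> \<epsilon>"
proof -
  have q: "0 \<le> (1 - s) ^ k" "(1 - s) ^ k \<le> 1" using s by (simp_all add: power_le_one)
  show ?thesis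
  proof (cases "c \<le> \<epsilon>")
    case True
    then show ?thesis using q g0 mult_right_mono[of "(1 - s) ^ k" 1 g0] by linarith
  next
    case False
    then have c: "c > \<epsilon>" "ln (c / \<epsilon>) > 0" using eps by auto
    have "ln (c / \<epsilon>) \<le> s * N * ln (c / \<epsilon>)" using s(3) c(2) by simp
    also have "\<dots> \<le> s * real k" using False k s(1) by (simp add: mult.assoc mult_left_mono)
    finally have log_le: "ln (c / \<epsilon>) \<le> s * real k" .
    have "(1 - s) ^ k \<le> exp (- s) ^ k"
      using s exp_ge_add_one_self[of "- s"] by (intro power_mono) auto
    also have "\<dots> = exp (- (s * real k))" by (simp add: exp_of_nat_mult[symmetric] mult.commute)
    also have "\<dots> \<le> exp (- ln (c / \<epsilon>))" using log_le by simp
    also have "\<dots> = \<epsilon> / c" using c eps by (simp add: exp_minus)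
    finally have "(1 - s) ^ k * g0 \<le> \<epsilon> / c * c"
      using g0 c eps by (intro mult_mono) auto
    then show ?thesis using c eps by simp
  qed
qed

lemma ereal_geometric_decay_below_eps:
  fixes D c :: ereal
  assumes s: "0 \<le> s" "s \<le> 1" "1 \<le> s * N" and D: "0 \<le> D" "D \<le> c" and eps: "\<epsilon> > 0"
    and k: "c = 0 \<or> (c \<noteq> \<infinity> \<and> N * ln (real_of_ereal c / \<epsilon>) \<le> real k)"
  shows "ereal ((1 - s) ^ k) * D \<le> ereal \<epsilon>"
proof -
  have "c \<noteq> \<infinity>" using k by auto
  then obtain g0 cr where g0: "D = ereal g0" "0 \<le> g0" "g0 \<le> cr" and cr: "c = ereal cr"
    using D by (cases D; cases c) auto
  then have "(1 - s) ^ k * g0 \<le> \<epsilon>"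
    using k by (intro geometric_decay_below_eps[OF s _ _ eps]) auto
  then show ?thesis using g0 by simp
qed

lemma piag_step_size_bounds:
  fixes K :: nat and L \<mu> :: real
  assumes mu: "\<mu> > 0" and mu_L: "\<mu> \<le> L"
  defines "Q \<equiv> L / \<mu>"
  defines "a \<equiv> real_of_int (\<lceil>ln (12 * (real K + 1) * Q)\<rceil>) + 2"
  defines "\<eta>a \<equiv> (1 / a) * (1 / (12 * (real K + 1) * Q)) powr (2 / (a - 2))"
  defines "\<eta> \<equiv> \<eta>a / (3 * L * (real K + 1))"
  shows "a \<ge> 3" and "\<eta> > 0" and "\<eta> * L * (real K + 1) \<le> 1 / 9"
    and "1 \<le> \<eta> * \<mu> / 2 * (54 * (exp 1)\<^sup>2 * a\<^sup>2 * (real K + 1)\<^sup>2 * Q)"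
proof -
  define y where "y = 12 * (real K + 1) * Q"
  define \<rho> where "\<rho> = (1 / y) powr (2 / (a - 2))"
  have L: "L > 0" using mu mu_L by simp
  have "1 \<le> Q" using mu mu_L by (simp add: Q_def)
  then have "12 * 1 * 1 \<le> 12 * (real K + 1) * Q" by (intro mult_mono) auto
  then have y: "y > 1" by (simp add: y_def)
  have a_eq: "a - 2 = real_of_int \<lceil>ln y\<rceil>" by (simp add: a_def y_def)
  have \<rho>: "exp (- 2) \<le> \<rho>" "\<rho> \<le> 1"
    unfolding \<rho>_def a_eq by (rule inverse_powr_ceiling_ln_bounds[OF y])+
  have "1 \<le> \<lceil>ln y\<rceil>" using y by simp
  then show a: "a \<ge> 3" using a_eq by linarith
  define w where "w = L * (real K + 1)"
  have w: "w > 0" using L by (simp add: w_def add_pos_nonneg)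
  have \<eta>: "\<eta> = \<rho> / a / (3 * w)"
    by (simp add: \<eta>_def \<eta>a_def \<rho>_def y_def w_def mult.assoc)
  have \<eta>L: "\<eta> * L * (real K + 1) = \<rho> / (3 * a)"
    unfolding mult.assoc w_def[symmetric] \<eta> using w a by (simp add: field_simps)
  have "\<rho> > 0" using \<rho>(1) exp_gt_zero[of "- 2"] by linarith
  then show "\<eta> > 0" unfolding \<eta> using w a by simp
  have "\<rho> / (3 * a) \<le> 1 / (3 * 3)" using \<rho> a by (intro frac_le) auto
  then show "\<eta> * L * (real K + 1) \<le> 1 / 9" unfolding \<eta>L by simp
  have "\<eta> * \<mu> / 2 * (54 * (exp 1)\<^sup>2 * a\<^sup>2 * (real K + 1)\<^sup>2 * Q)
      = 27 * (exp 1)\<^sup>2 * a\<^sup>2 * (real K + 1) * (\<eta> * L * (real K + 1))"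
    using mu by (simp add: Q_def power2_eq_square)
  also have "\<dots> = (9 * a * (real K + 1)) * ((exp 1)\<^sup>2 * \<rho>)"
    unfolding \<eta>L using a by (simp add: power2_eq_square)
  also have "1 * 1 \<le> \<dots>"
  proof (intro mult_mono)
    show "1 \<le> 9 * a * (real K + 1)" using a mult_mono[of 1 "9 * a" 1 "real K + 1"] by simp
    have "(exp 1)\<^sup>2 * exp (- 2) = (1::real)"
      by (simp add: power2_eq_square exp_add[symmetric] mult.assoc)
    then show "1 \<le> (exp 1)\<^sup>2 * \<rho>" using mult_left_mono[OF \<rho>(1), of "(exp 1)\<^sup>2"] by simp
  qed (use a in simp_all)
  finally show "1 \<le> \<eta> * \<mu> / 2 * (54 * (exp 1)\<^sup>2 * a\<^sup>2 * (real K + 1)\<^sup>2 * Q)" by simp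
qed

theorem corollary2:
  fixes m K :: nat
    and fi :: "nat \<Rightarrow> 'a::euclidean_space \<Rightarrow> real"
    and gf :: "nat \<Rightarrow> 'a \<Rightarrow> 'a"
    and Li :: "nat \<Rightarrow> real"
    and \<mu> \<epsilon> :: real
    and r :: "'a \<Rightarrow> ereal"
    and xstar x0 :: 'a
    and tau :: "nat \<Rightarrow> nat \<Rightarrow> nat"
    and x :: "nat \<Rightarrow> 'a"
  defines "f \<equiv> (\<lambda>z. (1 / real m) * (\<Sum>i=1..m. fi i z))"
  defines "L \<equiv> (1 / real m) * (\<Sum>i=1..m. Li i)"
  defines "F \<equiv> (\<lambda>z. ereal (f z) + r z)"
  defines "Q \<equiv> L / \<mu>"
  defines "a \<equiv> real_of_int (\<lceil>ln (12 * (real K + 1) * Q)\<rceil>) + 2"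
  defines "\<eta>a \<equiv> (1 / a) * (1 / (12 * (real K + 1) * Q)) powr (2 / (a - 2))"
  defines "\<eta> \<equiv> \<eta>a / (3 * L * (real K + 1))"
  defines "c \<equiv> Max ((\<lambda>j. F (x j) - F xstar) ` {0 .. nat \<lceil>a\<rceil> * K})"
  defines "M \<equiv> 54 * (exp 1)^2"
  assumes m_pos: "m \<ge> 1"
    and deriv: "\<And>i z. i \<in> {1..m} \<Longrightarrow> (fi i has_derivative (\<lambda>h. gf i z \<bullet> h)) (at z)"
    and cont: "\<And>i. i \<in> {1..m} \<Longrightarrow> continuous_on UNIV (gf i)"
    and lip: "\<And>i y z. i \<in> {1..m} \<Longrightarrow> norm (gf i y - gf i z) \<le> Li i * norm (y - z)"
    and Li_nonneg: "\<And>i. i \<in> {1..m} \<Longrightarrow> Li i \<ge> 0"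
    and mu_pos: "\<mu> > 0"
    and strong: "convex_on UNIV (\<lambda>z. f z - \<mu> / 2 * (norm z)^2)"
    and r_proper: "proper_fun r" and r_closed: "closed_fun r" and r_convex: "convex_fun r"
    and xstar_min: "\<And>z. F xstar \<le> F z"
    and tau_bounds: "\<And>i k. i \<in> {1..m} \<Longrightarrow> k - K \<le> tau i k \<and> tau i k \<le> k"
    and x_0: "x 0 = x0"
    and x_step: "\<And>k. x (Suc k) = prox r \<eta>
                   (x k - \<eta> *\<^sub>R ((1 / real m) *\<^sub>R (\<Sum>i=1..m. gf i (x (tau i k)))))"
    and eps_pos: "\<epsilon> > 0"
  shows "\<forall>k::nat. (c = 0 \<or> (c \<noteq> \<infinity> \<and>
            real k \<ge> M * a^2 * (real K + 1)^2 * Q * ln (real_of_ereal c / \<epsilon>) + a * real K))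
          \<longrightarrow> F (x k) - F xstar \<le> ereal \<epsilon>"
proof -
  define G where "G z = (1 / real m) *\<^sub>R (\<Sum>i=1..m. gf i z)" for z
  define g where "g k = (1 / real m) *\<^sub>R (\<Sum>i=1..m. gf i (x (tau i k)))" for k
  have der: "(f has_derivative (\<lambda>h. G z \<bullet> h)) (at z)" for z
    unfolding f_def G_def by (rule scaled_sum_has_derivative) (rule deriv)
  have lip_G: "norm (G y - G z) \<le> L * norm (y - z)" for y z
    using scaled_sum_gradient_deviation[where I = "{1..m}", OF lip, where c = "1 / real m" and p = "\<lambda>_. y"]
    by (simp add: G_def L_def sum_distrib_right)
  have err: "norm (g k - G (x k)) \<le> L * (\<Sum>j\<in>{k - K..<k}. norm (x (Suc j) - x j))" for k
    unfolding g_def G_def L_def using tau_bounds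
    by (intro scaled_sum_delayed_gradient_error[where I = "{1..m}", OF lip Li_nonneg]) auto
  have mu_L: "\<mu> \<le> L" by (rule strong_convexity_le_smoothness[OF der lip_G strong])
  have a: "a \<ge> 3" and eta: "\<eta> > 0" and step_size: "\<eta> * L * (real K + 1) \<le> 1 / 9"
    and rate_const: "1 \<le> \<eta> * \<mu> / 2 * (M * a\<^sup>2 * (real K + 1)\<^sup>2 * Q)"
    using piag_step_size_bounds[OF mu_pos mu_L, of K]
    unfolding \<eta>_def \<eta>a_def a_def Q_def M_def by (simp_all add: mult.assoc)
  have s: "0 \<le> \<eta> * \<mu> / 2" "\<eta> * \<mu> / 2 \<le> 1"
    using small_step_size_consequences(3)[OF eta mu_pos mu_L step_size] eta mu_pos by simp_all
  show ?thesis
  proof (intro allI impI)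
    fix k :: nat
    assume k: "c = 0 \<or> (c \<noteq> \<infinity> \<and> M * a\<^sup>2 * (real K + 1)\<^sup>2 * Q * ln (real_of_ereal c / \<epsilon>) + a * real K \<le> real k)"
    have "F (x k) - F xstar \<le> ereal ((1 - \<eta> * \<mu> / 2) ^ k) * (F (x 0) - F xstar)"
      unfolding F_def
      by (rule inexact_prox_grad_linear_rate[OF der lip_G strong r_proper r_closed r_convex mu_pos mu_L eta step_size _ _ err])
        (use xstar_min in \<open>simp add: F_def\<close>, unfold g_def, rule x_step)
    also have "\<dots> \<le> ereal \<epsilon>"
    proof (rule ereal_geometric_decay_below_eps[OF s rate_const ereal_diff_positive[OF xstar_min] _ eps_pos])
      show "F (x 0) - F xstar \<le> c" unfolding c_def by (rule Max_ge) auto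
      have "0 \<le> a * real K" using a by simp
      then show "c = 0 \<or> (c \<noteq> \<infinity> \<and> M * a\<^sup>2 * (real K + 1)\<^sup>2 * Q * ln (real_of_ereal c / \<epsilon>) \<le> real k)"
        using k by auto
    qed
    finally show "F (x k) - F xstar \<le> ereal \<epsilon>" .
  qed
qed

end
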